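(* Let $w\in\Omega_4$ (a path with three transitions) with transition counts $\tilde x_{ij}=x_{ij}(w)$, and let $i,j,t$ be distinct elements of $\{1,2,3\}$. Then $2\tilde x_{ij}+\tilde x_{it}+\tilde x_{tj}\ge \tilde x_{ji}$. Equality holds for the paths $jiji$, $jtji$, $jiti$ (which start at $j$ and end at $i$). If $2\tilde x_{ij}+\tilde x_{it}+\tilde x_{tj}-\tilde x_{ji}=1$, then the pair (first letter, last letter) of $w$ is one of $(j,t)$, $(t,i)$, $(i,i)$, $(j,j)$, $(t,t)$. If $2\tilde x_{ij}+\tilde x_{it}+\tilde x_{tj}-\tilde x_{ji}=2$, then the pair (first letter, last letter) of $w$ is one of $(t,j)$, $(i,t)$, $(i,i)$, $(j,j)$, $(t,t)$.
   Context: $\Omega_T$ is the set of words $s_1\cdots s_T$ over $\{1,2,3\}$ with $s_l\ne s_{l+1}$ for all $l$; for $i\ne j$, $x_{ij}(w)$ is the number of $l\in\{1,\dots,T-1\}$ with $s_ls_{l+1}=ij$. *)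

theory Defs
  imports Main
begin

definition Omega :: "nat \<Rightarrow> nat list set" where
  "Omega T = {w. length w = T \<and> set w \<subseteq> {1,2,3} \<and> (\<forall>l. Suc l < T \<longrightarrow> w ! l \<noteq> w ! Suc l)}"

text \<open>Number of positions l (1 <= l <= T-1, here 0-indexed) with s_l s_{l+1} = i j.\<close>
definition xcount :: "nat \<Rightarrow> nat \<Rightarrow> nat list \<Rightarrow> nat" where
  "xcount i j w = card {l. Suc l < length w \<and> w ! l = i \<and> w ! Suc l = j}"

end

theory Submission
  imports Defs
begin

text \<open>The quantity \<open>2 x\<^sub>i\<^sub>j + x\<^sub>i\<^sub>t + x\<^sub>t\<^sub>j - x\<^sub>j\<^sub>i\<close> is additive over the transitions of a word:
  each transition \<open>uv\<close> contributes a weight, namely 2, 1, 1, -1, 0, 0 for \<open>ij, it, tj, ji, jt, ti\<close>.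
  A word of \<open>\<Omega>\<^sub>4\<close> is a word of length four over \<open>{i, j, t}\<close> without repeated letters, and for each
  of these 24 words the claims reduce to adding three of these weights.\<close>

lemma xcount_singleton [simp]: "xcount i j [a] = 0"
  by (simp add: xcount_def)

lemma xcount_Cons_Cons [simp]:
  "xcount i j (a # b # w) = of_bool (a = i \<and> b = j) + xcount i j (b # w)"
proof -
  define P where "P v l \<longleftrightarrow> Suc l < length v \<and> v ! l = i \<and> v ! Suc l = j" for v l
  have split: "{l. P (a # b # w) l} = (if a = i \<and> b = j then {0} else {}) \<union> Suc ` {l. P (b # w) l}"
  proof (intro set_eqI)
    fix l
    show "l \<in> {l. P (a # b # w) l} \<longleftrightarrow> l \<in> (if a = i \<and> b = j then {0} else {}) \<union> Suc ` {l. P (b # w) l}"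
      by (cases l) (auto simp: P_def)
  qed
  have fin: "finite {l. P (b # w) l}"
    by (rule finite_subset[of _ "{..<length w}"]) (auto simp: P_def)
  have "card {l. P (a # b # w) l} = of_bool (a = i \<and> b = j) + card {l. P (b # w) l}"
    unfolding split using fin by (auto simp: card_image card_insert_if)
  then show ?thesis
    by (simp add: xcount_def P_def[abs_def])
qed

lemma Omega_4E:
  assumes "w \<in> Omega 4"
  obtains a b c d where "w = [a, b, c, d]" "{a, b, c, d} \<subseteq> {1, 2, 3}" "a \<noteq> b" "b \<noteq> c" "c \<noteq> d"
proof -
  from assms obtain a b c d where w: "w = [a, b, c, d]"
    by (auto simp: Omega_def length_Suc_conv numeral_eq_Suc)
  from assms have "{a, b, c, d} \<subseteq> {1, 2, 3}" "a \<noteq> b" "b \<noteq> c" "c \<noteq> d"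
    unfolding Omega_def w by (auto dest: spec[of _ 0] spec[of _ 1] spec[of _ 2])
  with w show thesis ..
qed

definition excess :: "nat \<Rightarrow> nat \<Rightarrow> nat \<Rightarrow> nat list \<Rightarrow> int" where
  "excess i j t w = 2 * int (xcount i j w) + int (xcount i t w) + int (xcount t j w) - int (xcount j i w)"

definition step_weight :: "nat \<Rightarrow> nat \<Rightarrow> nat \<Rightarrow> nat \<Rightarrow> nat \<Rightarrow> int" where
  "step_weight i j t u v =
     2 * of_bool (u = i \<and> v = j) + of_bool (u = i \<and> v = t) + of_bool (u = t \<and> v = j) - of_bool (u = j \<and> v = i)"

lemma excess_singleton [simp]: "excess i j t [u] = 0"
  by (simp add: excess_def)

lemma excess_Cons_Cons [simp]: "excess i j t (u # v # w) = step_weight i j t u v + excess i j t (v # w)"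
  unfolding excess_def step_weight_def xcount_Cons_Cons of_nat_add by simp

lemma step_weight_table:
  fixes i j t :: nat
  assumes "i \<noteq> j" "i \<noteq> t" "j \<noteq> t"
  shows "step_weight i j t i j = 2" "step_weight i j t i t = 1" "step_weight i j t t j = 1"
    "step_weight i j t j i = -1" "step_weight i j t j t = 0" "step_weight i j t t i = 0"
  using assms by (simp_all add: step_weight_def eq_commute[of j i] eq_commute[of t i] eq_commute[of t j])

lemma excess_eq_0_words:
  fixes i j t :: nat
  assumes "i \<noteq> j" "i \<noteq> t" "j \<noteq> t"
  shows "excess i j t [j, i, j, i] = 0" "excess i j t [j, t, j, i] = 0" "excess i j t [j, i, t, i] = 0"
  by (simp_all add: step_weight_table[OF assms])

lemma excess_four_letter_words:
  fixes i j t :: nat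
  assumes "i \<noteq> j" "i \<noteq> t" "j \<noteq> t"
  shows "\<forall>a\<in>{i, j, t}. \<forall>b\<in>{i, j, t}. \<forall>c\<in>{i, j, t}. \<forall>d\<in>{i, j, t}.
    a \<noteq> b \<longrightarrow> b \<noteq> c \<longrightarrow> c \<noteq> d \<longrightarrow>
      excess i j t [a, b, c, d] \<ge> 0
      \<and> (excess i j t [a, b, c, d] = 1 \<longrightarrow> (a, d) \<in> {(j, t), (t, i), (i, i), (j, j), (t, t)})
      \<and> (excess i j t [a, b, c, d] = 2 \<longrightarrow> (a, d) \<in> {(t, j), (i, t), (i, i), (j, j), (t, t)})"
  using assms by (simp add: step_weight_table[OF assms])

theorem lemma5:
  fixes w :: "nat list" and i j t :: nat
  assumes "w \<in> Omega 4"
    and "i \<in> {1,2,3}" and "j \<in> {1,2,3}" and "t \<in> {1,2,3}"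
    and "i \<noteq> j" and "i \<noteq> t" and "j \<noteq> t"
  shows "2 * int (xcount i j w) + int (xcount i t w) + int (xcount t j w) \<ge> int (xcount j i w)
    \<and> (w \<in> {[j,i,j,i], [j,t,j,i], [j,i,t,i]} \<longrightarrow>
           2 * int (xcount i j w) + int (xcount i t w) + int (xcount t j w) = int (xcount j i w))
    \<and> (2 * int (xcount i j w) + int (xcount i t w) + int (xcount t j w) - int (xcount j i w) = 1 \<longrightarrow>
           (hd w, last w) \<in> {(j,t), (t,i), (i,i), (j,j), (t,t)})
    \<and> (2 * int (xcount i j w) + int (xcount i t w) + int (xcount t j w) - int (xcount j i w) = 2 \<longrightarrow>
           (hd w, last w) \<in> {(t,j), (i,t), (i,i), (j,j), (t,t)})"
proof -
  obtain a b c d where w: "w = [a, b, c, d]" and letters: "{a, b, c, d} \<subseteq> {1, 2, 3}"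
    and steps: "a \<noteq> b" "b \<noteq> c" "c \<noteq> d"
    using assms(1) by (rule Omega_4E)
  have "{i, j, t} = {1, 2, 3}"
    by (rule card_subset_eq) (use assms(2-7) in auto)
  with letters have "a \<in> {i, j, t}" "b \<in> {i, j, t}" "c \<in> {i, j, t}" "d \<in> {i, j, t}"
    by simp_all
  from excess_four_letter_words[OF assms(5-7), rule_format, OF this steps]
  have "excess i j t w \<ge> 0"
    and "excess i j t w = 1 \<longrightarrow> (hd w, last w) \<in> {(j,t), (t,i), (i,i), (j,j), (t,t)}"
    and "excess i j t w = 2 \<longrightarrow> (hd w, last w) \<in> {(t,j), (i,t), (i,i), (j,j), (t,t)}"
    unfolding w by simp_all
  moreover have "w \<in> {[j,i,j,i], [j,t,j,i], [j,i,t,i]} \<longrightarrow> excess i j t w = 0"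
    using excess_eq_0_words[OF assms(5-7)] by auto
  ultimately show ?thesis
    unfolding excess_def by linarith
qed

end
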